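(* Let $A$ be a non-empty set, $\xi:B_{\ell_\infty(A)}\to\mathbb R$ a weak$^*$-continuous function (weak$^*$ topology from $\ell_\infty(A)=\ell_1(A)^*$), and $\phi\in\ell_\infty(A)^*$ with decomposition $\phi=\phi_0+\phi_1$, where $\phi_0\in\ell_1(A)$ (acting by $\phi_0(x^* )=\sum_a\phi_0(a)x^*(a)$) and $\phi_1\in\ell_\infty(A)^*$ vanishes on all finitely supported elements of $\ell_\infty(A)$. If $\xi(x^* )\le g_\phi(x^* )$ for all $x^*\in B_{\ell_\infty(A)}$, then $\xi(x^* )\le g_{\phi_0}(x^* )$ for all $x^*\in B_{\ell_\infty(A)}$.
   Context: For a linear functional $\psi$ on $\ell_\infty(A)$, $g_\psi:\ell_\infty(A)\to\mathbb R_+$ is defined by $g_\psi(x^* )=|\psi(|x^*|)|$. Every $\phi\in\ell_\infty(A)^*$ decomposes uniquely as $\phi=\phi_0+\phi_1$ as described. *)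

theory Defs
  imports "HOL-Analysis.Analysis"
begin

text \<open>ell_infinity(A), with A modelled by the (non-empty) type 'a.\<close>
definition linf :: "('a \<Rightarrow> real) set" where
  "linf = {x. bounded (range x)}"

definition linf_norm :: "('a \<Rightarrow> real) \<Rightarrow> real" where
  "linf_norm x = (SUP a. \<bar>x a\<bar>)"

definition linf_ball :: "('a \<Rightarrow> real) set" where
  "linf_ball = {x. \<forall>a. \<bar>x a\<bar> \<le> 1}"

definition l1 :: "('a \<Rightarrow> real) set" where
  "l1 = {f. (\<lambda>a. \<bar>f a\<bar>) summable_on UNIV}"

definition l1_pair :: "('a \<Rightarrow> real) \<Rightarrow> ('a \<Rightarrow> real) \<Rightarrow> real" where
  "l1_pair f x = (\<Sum>\<^sub>\<infinity>a. f a * x a)"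

text \<open>Elements of the dual ell_infinity(A)^*: bounded linear functionals on ell_infinity
  (values outside ell_infinity are irrelevant).\<close>
definition linf_dual :: "(('a \<Rightarrow> real) \<Rightarrow> real) set" where
  "linf_dual = {\<psi>. (\<forall>x\<in>linf. \<forall>y\<in>linf. \<psi> (\<lambda>a. x a + y a) = \<psi> x + \<psi> y)
      \<and> (\<forall>c. \<forall>x\<in>linf. \<psi> (\<lambda>a. c * x a) = c * \<psi> x)
      \<and> (\<exists>C. \<forall>x\<in>linf. \<bar>\<psi> x\<bar> \<le> C * linf_norm x)}"

definition weak_star :: "('a \<Rightarrow> real) topology" where
  "weak_star = topology_generated_by
     {{x. l1_pair f x \<in> U} | f U. f \<in> l1 \<and> open U}"

definition g_fun :: "(('a \<Rightarrow> real) \<Rightarrow> real) \<Rightarrow> ('a \<Rightarrow> real) \<Rightarrow> real" where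
  "g_fun \<psi> x = \<bar>\<psi> (\<lambda>a. \<bar>x a\<bar>)\<bar>"

definition fin_supp :: "('a \<Rightarrow> real) \<Rightarrow> bool" where
  "fin_supp x \<longleftrightarrow> finite {a. x a \<noteq> 0}"

end

theory Submission
  imports Defs
begin

text \<open>Truncating x to a finite set F gives a finitely supported element of the unit ball, on
  which the part \<phi>1 vanishes, so there \<xi> is bounded by g of the l1 part \<phi>0. The truncations
  converge weak-star to x along the net of finite subsets of A, since pairing with an l1
  element turns them into the partial sums of an absolutely summable family; the same
  partial sums make g of \<phi>0 converge along the truncations. Weak-star continuity of \<xi> on
  the ball then lets the inequality pass to the limit.\<close>

definition truncate :: "'a set \<Rightarrow> ('a \<Rightarrow> real) \<Rightarrow> 'a \<Rightarrow> real" where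
  "truncate F x = (\<lambda>a. if a \<in> F then x a else 0)"

lemma limitin_topology_generated_by:
  assumes "l \<in> \<Union>S"
    and "\<And>s. s \<in> S \<Longrightarrow> l \<in> s \<Longrightarrow> eventually (\<lambda>i. g i \<in> s) F"
  shows "limitin (topology_generated_by S) g l F"
  unfolding limitin_def
proof (intro conjI allI impI)
  show "l \<in> topspace (topology_generated_by S)"
    using assms(1) by simp
  fix U assume "openin (topology_generated_by S) U \<and> l \<in> U"
  then have "generate_topology_on S U" "l \<in> U"
    by (auto simp: openin_topology_generated_by_iff)
  then show "eventually (\<lambda>i. g i \<in> U) F"
  proof (induction U rule: generate_topology_on.induct)
    case Empty
    then show ?case by simp
  next
    case (Int a b)
    then show ?case by (auto intro: eventually_conj)
  next
    case (UN K)
    then obtain k where "k \<in> K" "l \<in> k" by auto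
    with UN.IH have "eventually (\<lambda>i. g i \<in> k) F" by blast
    then show ?case
      by (rule eventually_mono) (use \<open>k \<in> K\<close> in auto)
  next
    case (Basis s)
    then show ?case using assms(2) by blast
  qed
qed

lemma linf_ball_subset_linf: "linf_ball \<subseteq> linf"
  unfolding linf_ball_def linf_def bounded_iff by auto

lemma truncate_in_linf_ball: "x \<in> linf_ball \<Longrightarrow> truncate F x \<in> linf_ball"
  by (simp add: linf_ball_def truncate_def)

lemma linf_ball_abs: "x \<in> linf_ball \<Longrightarrow> (\<lambda>a. \<bar>x a\<bar>) \<in> linf_ball"
  by (simp add: linf_ball_def)

lemma abs_truncate: "(\<lambda>a. \<bar>truncate F x a\<bar>) = truncate F (\<lambda>a. \<bar>x a\<bar>)"
  by (auto simp: truncate_def)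

lemma fin_supp_truncate: "finite F \<Longrightarrow> fin_supp (truncate F x)"
  unfolding fin_supp_def truncate_def by (rule finite_subset) auto

lemma l1_pair_summable:
  assumes "f \<in> l1" and "x \<in> linf"
  shows "(\<lambda>a. f a * x a) summable_on UNIV"
proof -
  obtain B where B: "\<And>a. \<bar>x a\<bar> \<le> B"
    using assms(2) unfolding linf_def bounded_iff by auto
  have "(\<lambda>a. B * \<bar>f a\<bar>) summable_on UNIV"
    using assms(1) by (simp add: l1_def summable_on_cmult_right)
  then have "(\<lambda>a. norm (f a * x a)) summable_on UNIV"
  proof (rule summable_on_comparison_test)
    show "norm (f a * x a) \<le> B * \<bar>f a\<bar>" for a
      using mult_left_mono[OF B[of a], of "\<bar>f a\<bar>"] by (simp add: abs_mult mult.commute)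
  qed simp
  then show ?thesis
    using summable_on_iff_abs_summable_on_real by blast
qed

lemma l1_pair_truncate:
  assumes "finite F"
  shows "l1_pair f (truncate F x) = (\<Sum>a\<in>F. f a * x a)"
proof -
  have "l1_pair f (truncate F x) = infsum (\<lambda>a. f a * x a) F"
    unfolding l1_pair_def truncate_def by (rule infsum_cong_neutral) auto
  then show ?thesis
    using assms by simp
qed

lemma tendsto_l1_pair_truncate:
  assumes "f \<in> l1" and "x \<in> linf"
  shows "((\<lambda>F. l1_pair f (truncate F x)) \<longlongrightarrow> l1_pair f x) (finite_subsets_at_top UNIV)"
proof -
  have "((\<lambda>a. f a * x a) has_sum l1_pair f x) UNIV"
    unfolding l1_pair_def using l1_pair_summable[OF assms] by (rule has_sum_infsum)
  then have "(sum (\<lambda>a. f a * x a) \<longlongrightarrow> l1_pair f x) (finite_subsets_at_top UNIV)"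
    by (simp add: has_sum_def)
  then show ?thesis
    by (rule Lim_transform_eventually)
       (auto simp: l1_pair_truncate eventually_finite_subsets_at_top_weakI)
qed

lemma limitin_weak_star_truncate:
  assumes "x \<in> linf"
  shows "limitin weak_star (\<lambda>F. truncate F x) x (finite_subsets_at_top UNIV)"
  unfolding weak_star_def
proof (rule limitin_topology_generated_by)
  have "(\<lambda>_. 0) \<in> l1"
    by (simp add: l1_def)
  then show "x \<in> \<Union> {{x. l1_pair f x \<in> U} | f U. f \<in> l1 \<and> open U}"
    by blast
next
  fix s assume "s \<in> {{x. l1_pair f x \<in> U} | f U. f \<in> l1 \<and> open U}" and "x \<in> s"
  then obtain f U where s: "s = {x. l1_pair f x \<in> U}" and "f \<in> l1" "open U" "l1_pair f x \<in> U"
    by blast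
  with tendsto_l1_pair_truncate[OF \<open>f \<in> l1\<close> assms]
  show "eventually (\<lambda>F. truncate F x \<in> s) (finite_subsets_at_top UNIV)"
    by (auto simp: tendsto_def)
qed

lemma g_fun_truncate:
  assumes "finite F"
    and "\<forall>y\<in>linf. fin_supp y \<longrightarrow> \<phi>1 y = 0"
    and "\<forall>y\<in>linf. \<phi> y = l1_pair \<phi>0 y + \<phi>1 y"
    and "x \<in> linf_ball"
  shows "g_fun \<phi> (truncate F x) = g_fun (l1_pair \<phi>0) (truncate F x)"
proof -
  let ?y = "truncate F (\<lambda>a. \<bar>x a\<bar>)"
  have "?y \<in> linf"
    using assms(4) linf_ball_abs truncate_in_linf_ball linf_ball_subset_linf by blast
  moreover have "\<phi>1 ?y = 0"
    using assms(1,2) fin_supp_truncate calculation by blast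
  ultimately show ?thesis
    using assms(3) by (simp add: g_fun_def abs_truncate)
qed

theorem lemma4p9:
  fixes \<xi> :: "('a \<Rightarrow> real) \<Rightarrow> real"
    and \<phi> \<phi>1 :: "('a \<Rightarrow> real) \<Rightarrow> real"
    and \<phi>0 :: "'a \<Rightarrow> real"
  assumes cont: "continuous_map (subtopology weak_star linf_ball) euclideanreal \<xi>"
    and phi: "\<phi> \<in> linf_dual"
    and phi0: "\<phi>0 \<in> l1"
    and phi1: "\<phi>1 \<in> linf_dual"
    and phi1_van: "\<forall>x\<in>linf. fin_supp x \<longrightarrow> \<phi>1 x = 0"
    and decomp: "\<forall>x\<in>linf. \<phi> x = l1_pair \<phi>0 x + \<phi>1 x"
    and le: "\<forall>x\<in>linf_ball. \<xi> x \<le> g_fun \<phi> x"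
  shows "\<forall>x\<in>linf_ball. \<xi> x \<le> g_fun (l1_pair \<phi>0) x"
proof
  fix x :: "'a \<Rightarrow> real" assume x: "x \<in> linf_ball"
  let ?net = "finite_subsets_at_top (UNIV :: 'a set)"
  have "limitin weak_star (\<lambda>F. truncate F x) x ?net"
    using x linf_ball_subset_linf by (blast intro: limitin_weak_star_truncate)
  moreover have "eventually (\<lambda>F. truncate F x \<in> linf_ball) ?net"
    using x truncate_in_linf_ball by (intro always_eventually) blast
  ultimately have "limitin (subtopology weak_star linf_ball) (\<lambda>F. truncate F x) x ?net"
    using x by (simp add: limitin_subtopology)
  then have \<xi>_lim: "((\<lambda>F. \<xi> (truncate F x)) \<longlongrightarrow> \<xi> x) ?net"
    using continuous_map_limit[OF cont] by (simp add: o_def)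
  have "(\<lambda>a. \<bar>x a\<bar>) \<in> linf"
    using x linf_ball_abs linf_ball_subset_linf by blast
  then have g_lim: "((\<lambda>F. g_fun (l1_pair \<phi>0) (truncate F x)) \<longlongrightarrow> g_fun (l1_pair \<phi>0) x) ?net"
    unfolding g_fun_def abs_truncate by (rule tendsto_rabs[OF tendsto_l1_pair_truncate[OF phi0]])
  have "eventually (\<lambda>F. \<xi> (truncate F x) \<le> g_fun (l1_pair \<phi>0) (truncate F x)) ?net"
  proof (rule eventually_finite_subsets_at_top_weakI)
    fix F :: "'a set" assume "finite F"
    then show "\<xi> (truncate F x) \<le> g_fun (l1_pair \<phi>0) (truncate F x)"
      using le truncate_in_linf_ball[OF x] g_fun_truncate[OF \<open>finite F\<close> phi1_van decomp x]
      by metis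
  qed
  then show "\<xi> x \<le> g_fun (l1_pair \<phi>0) x"
    using tendsto_le[OF finite_subsets_at_top_neq_bot g_lim \<xi>_lim] by blast
qed

end
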